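(* Let $\delta>0$ be fixed. There is an absolute constant $C>0$ such that the following holds. If $\kappa,\beta,\gamma\to\infty$ with $\frac12\beta\log\beta<\kappa<\frac1\delta\beta\log\beta$ and $\gamma<\beta<\gamma^{2-\delta}$, then, writing $c=\kappa/\beta$, \[f(\beta,\gamma,\kappa)\ge(1-o(1))\Big(1-(c+1)e^{-c}-c^{C}e^{-2c}\Big)^{\beta}.\]
   Context: For positive integers $\beta,\gamma,\kappa$ with $\kappa\le\beta\gamma$, $f(\beta,\gamma,\kappa)$ is the probability that a $\beta\times\gamma$ matrix with entries in $\{0,1\}$, chosen uniformly at random among all such matrices with exactly $\kappa$ entries equal to $1$, has at least two $1$'s in every row. *)

theory Defs
  imports "HOL-Analysis.Analysis" "HOL-Library.FuncSet"
begin

definition zero_one_matrices :: "nat \<Rightarrow> nat \<Rightarrow> (nat \<times> nat \<Rightarrow> nat) set" where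
  "zero_one_matrices \<beta> \<gamma> = ({0..<\<beta>} \<times> {0..<\<gamma>}) \<rightarrow>\<^sub>E {0, 1}"

definition matrices_with_ones :: "nat \<Rightarrow> nat \<Rightarrow> nat \<Rightarrow> (nat \<times> nat \<Rightarrow> nat) set" where
  "matrices_with_ones \<beta> \<gamma> \<kappa> =
     {M \<in> zero_one_matrices \<beta> \<gamma>. card {p \<in> {0..<\<beta>} \<times> {0..<\<gamma>}. M p = 1} = \<kappa>}"

definition good_matrices :: "nat \<Rightarrow> nat \<Rightarrow> nat \<Rightarrow> (nat \<times> nat \<Rightarrow> nat) set" where
  "good_matrices \<beta> \<gamma> \<kappa> =
     {M \<in> matrices_with_ones \<beta> \<gamma> \<kappa>. \<forall>i<\<beta>. card {j \<in> {0..<\<gamma>}. M (i, j) = 1} \<ge> 2}"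

text \<open>Probability under the uniform distribution on matrices with exactly kappa ones.\<close>
definition f :: "nat \<Rightarrow> nat \<Rightarrow> nat \<Rightarrow> real" where
  "f \<beta> \<gamma> \<kappa> = real (card (good_matrices \<beta> \<gamma> \<kappa>)) / real (card (matrices_with_ones \<beta> \<gamma> \<kappa>))"

end

theory Submission
  imports Defs
begin

text \<open>Identify a matrix with the set \<open>S\<close> of its cells equal to 1 and weight \<open>S\<close> by
  \<open>x ^ card S\<close>. Since the condition is imposed row by row, the total weight of the good sets
  factorises as \<open>G x = ((1 + x) ^ \<gamma> - 1 - \<gamma> x) ^ \<beta>\<close>. Good sets form an up-set, so by double
  counting the fraction of good sets among the \<open>k\<close>-sets increases with \<open>k\<close>; splitting the
  weight at size \<open>\<kappa>\<close> gives \<open>G x - (x / y) ^ \<kappa> G y \<le> f \<beta> \<gamma> \<kappa> (1 + x) ^ (\<beta> \<gamma>)\<close> for \<open>x \<le> y\<close>.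
  With \<open>\<gamma> x\<close> slightly below \<open>c = \<kappa> / \<beta>\<close> and \<open>y = x (1 + s)\<close> for a suitable small \<open>s\<close>,
  the subtracted term is an \<open>\<epsilon>\<close>-fraction of the main one, and the main term is
  \<open>(1 - h) ^ \<beta>\<close> where \<open>h = (1 + \<gamma> x) / (1 + x) ^ \<gamma> \<approx> (1 + c) exp (- c)\<close> is the chance that
  a row has fewer than two 1's; in the range \<open>\<gamma> < \<beta> < \<gamma> powr (2 - \<delta>)\<close> all the resulting
  errors are absorbed by the term \<open>c ^ 4 exp (- 2 c)\<close>.\<close>

section \<open>Matrices as sets of cells\<close>

lemma sum_power_card_Pow:
  fixes x :: "'b::comm_semiring_1"
  assumes "finite A"
  shows "(\<Sum>S\<in>Pow A. x ^ card S) = (1 + x) ^ card A"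
  using prod_add[OF assms, of "\<lambda>_. x" "\<lambda>_. 1"] by (simp add: add.commute)

lemma card_Collect_bij_betw:
  assumes "bij_betw h X Y"
  shows "card {x \<in> X. P (h x)} = card {y \<in> Y. P y}"
proof -
  have "bij_betw h {x \<in> X. P (h x)} {y \<in> Y. P y}"
    using assms by (auto simp: bij_betw_def inj_on_def)
  then show ?thesis by (rule bij_betw_same_card)
qed

lemma bij_betw_ones_PiE:
  "bij_betw (\<lambda>M. {p \<in> A. M p = (1::nat)}) (A \<rightarrow>\<^sub>E {0, 1}) (Pow A)"
proof (rule bij_betw_byWitness[where f' = "\<lambda>S. \<lambda>p\<in>A. if p \<in> S then 1 else 0"])
  show "\<forall>M \<in> A \<rightarrow>\<^sub>E {0, 1}. (\<lambda>p\<in>A. if p \<in> {p \<in> A. M p = 1} then 1 else 0) = M"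
    by (force simp: PiE_iff extensional_def)
qed (auto split: if_splits)

abbreviation cells :: "nat \<Rightarrow> nat \<Rightarrow> (nat \<times> nat) set" where
  "cells \<beta> \<gamma> \<equiv> {0..<\<beta>} \<times> {0..<\<gamma>}"

definition row_set :: "('a \<times> 'b) set \<Rightarrow> 'a \<Rightarrow> 'b set" where
  "row_set S i = {j. (i, j) \<in> S}"

definition good_sets :: "nat \<Rightarrow> nat \<Rightarrow> (nat \<times> nat) set set" where
  "good_sets \<beta> \<gamma> = {S \<in> Pow (cells \<beta> \<gamma>). \<forall>i\<in>{0..<\<beta>}. 2 \<le> card (row_set S i)}"

lemma card_matrices_with_ones: "card (matrices_with_ones \<beta> \<gamma> \<kappa>) = (\<beta> * \<gamma>) choose \<kappa>"
proof -
  have "card (matrices_with_ones \<beta> \<gamma> \<kappa>) = card {S \<in> Pow (cells \<beta> \<gamma>). card S = \<kappa>}"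
    unfolding matrices_with_ones_def zero_one_matrices_def
    by (rule card_Collect_bij_betw[OF bij_betw_ones_PiE])
  also have "\<dots> = (\<beta> * \<gamma>) choose \<kappa>"
    using n_subsets[of "cells \<beta> \<gamma>" \<kappa>] by (simp add: Collect_conj_eq Pow_def card_cartesian_product)
  finally show ?thesis .
qed

lemma card_good_matrices:
  "card (good_matrices \<beta> \<gamma> \<kappa>) = card {S \<in> good_sets \<beta> \<gamma>. card S = \<kappa>}"
proof -
  define P where "P S \<longleftrightarrow> card S = \<kappa> \<and> (\<forall>i\<in>{0..<\<beta>}. 2 \<le> card (row_set S i))" for S :: "(nat \<times> nat) set"
  have "good_matrices \<beta> \<gamma> \<kappa> = {M \<in> cells \<beta> \<gamma> \<rightarrow>\<^sub>E {0, 1}. P {p \<in> cells \<beta> \<gamma>. M p = 1}}"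
    unfolding good_matrices_def matrices_with_ones_def zero_one_matrices_def P_def row_set_def
    by auto
  then have "card (good_matrices \<beta> \<gamma> \<kappa>) = card {S \<in> Pow (cells \<beta> \<gamma>). P S}"
    by (simp only: card_Collect_bij_betw[OF bij_betw_ones_PiE])
  also have "{S \<in> Pow (cells \<beta> \<gamma>). P S} = {S \<in> good_sets \<beta> \<gamma>. card S = \<kappa>}"
    by (auto simp: P_def good_sets_def)
  finally show ?thesis .
qed

section \<open>Up-sets and the two-weight bound\<close>

definition upward_closed_in :: "'a set \<Rightarrow> 'a set set \<Rightarrow> bool" where
  "upward_closed_in A F \<longleftrightarrow> F \<subseteq> Pow A \<and> (\<forall>S\<in>F. \<forall>p\<in>A. insert p S \<in> F)"

lemma finite_upward_closed_in:
  assumes "finite A" "upward_closed_in A F"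
  shows "finite F"
  using assms by (auto simp: upward_closed_in_def intro: finite_subset[of _ "Pow A"])

lemma card_slice_step:
  assumes A: "finite A" and F: "upward_closed_in A F"
  shows "card {S \<in> F. card S = k} * (card A - k) \<le> card {S \<in> F. card S = Suc k} * Suc k"
proof -
  define F\<^sub>k where "F\<^sub>k = {S \<in> F. card S = k}"
  define F\<^sub>k\<^sub>1 where "F\<^sub>k\<^sub>1 = {S \<in> F. card S = Suc k}"
  have sub: "S \<subseteq> A" "finite S" if "S \<in> F" for S
    using F A that by (auto simp: upward_closed_in_def dest: finite_subset[OF _ A])
  have fin: "finite F\<^sub>k" "finite F\<^sub>k\<^sub>1"
    using finite_upward_closed_in[OF A F] by (simp_all add: F\<^sub>k_def F\<^sub>k\<^sub>1_def)
  \<comment> \<open>Double counting of pairs (set, added element) against pairs (set, removable element).\<close>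
  have "card (SIGMA S:F\<^sub>k. A - S) = card F\<^sub>k * (card A - k)"
    using fin sub A by (subst card_SigmaI) (auto simp: F\<^sub>k_def card_Diff_subset)
  moreover have "card (SIGMA T:F\<^sub>k\<^sub>1. T) = card F\<^sub>k\<^sub>1 * Suc k"
    using fin sub by (subst card_SigmaI) (auto simp: F\<^sub>k\<^sub>1_def)
  moreover have "card (SIGMA S:F\<^sub>k. A - S) \<le> card (SIGMA T:F\<^sub>k\<^sub>1. T)"
  proof (rule card_inj_on_le)
    show "inj_on (\<lambda>(S, p). (insert p S, p)) (SIGMA S:F\<^sub>k. A - S)"
    proof (rule inj_onI, clarsimp)
      fix S S' p assume "p \<notin> S" "p \<notin> S'" "insert p S = insert p S'"
      then show "S = S'" by (metis insert_ident)
    qed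
    show "(\<lambda>(S, p). (insert p S, p)) ` (SIGMA S:F\<^sub>k. A - S) \<subseteq> (SIGMA T:F\<^sub>k\<^sub>1. T)"
      using F sub by (auto simp: F\<^sub>k_def F\<^sub>k\<^sub>1_def upward_closed_in_def)
    show "finite (SIGMA T:F\<^sub>k\<^sub>1. T)"
      using fin sub by (auto simp: F\<^sub>k\<^sub>1_def)
  qed
  ultimately show ?thesis by (simp add: F\<^sub>k_def F\<^sub>k\<^sub>1_def)
qed

lemma card_slice_binomial_mono:
  assumes A: "finite A" and F: "upward_closed_in A F" and "k \<le> m"
  shows "card {S \<in> F. card S = k} * (card A choose m) \<le> card {S \<in> F. card S = m} * (card A choose k)"
  using \<open>k \<le> m\<close>
proof (induction m rule: dec_induct)
  case base
  then show ?case by simp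
next
  case (step m)
  define n where "n = card A"
  define a where "a j = card {S \<in> F. card S = j}" for j
  have binom: "(n choose Suc m) * Suc m = (n - m) * (n choose m)"
    using binomial_absorption[of m n] binomial_absorb_comp[of n m] by (simp add: mult.commute)
  have "a k * (n choose Suc m) * Suc m = a k * (n choose m) * (n - m)"
    by (metis binom mult.assoc mult.commute)
  also have "\<dots> \<le> a m * (n - m) * (n choose k)"
    using step.IH by (simp add: a_def n_def mult_ac)
  also have "\<dots> \<le> a (Suc m) * Suc m * (n choose k)"
    using card_slice_step[OF A F, of m] by (simp add: a_def n_def)
  finally have "a k * (n choose Suc m) * Suc m \<le> a (Suc m) * (n choose k) * Suc m"
    by (simp only: mult_ac)
  then show ?case by (simp only: a_def n_def mult_le_cancel2)
qed

lemma sum_power_card_large_le: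
  fixes x y :: real
  assumes F: "finite F" and x: "0 < x" and xy: "x \<le> y"
  shows "(\<Sum>S\<in>{S \<in> F. \<kappa> < card S}. x ^ card S) \<le> (x / y) ^ \<kappa> * (\<Sum>S\<in>F. y ^ card S)"
proof -
  have term_le: "x ^ card S \<le> (x / y) ^ \<kappa> * y ^ card S" if "\<kappa> < card S" for S :: "'a set"
  proof -
    have "x ^ card S = x ^ \<kappa> * x ^ (card S - \<kappa>)" "y ^ card S = y ^ \<kappa> * y ^ (card S - \<kappa>)"
      using that by (simp_all flip: power_add)
    moreover have "x ^ (card S - \<kappa>) \<le> y ^ (card S - \<kappa>)" using x xy by (intro power_mono) auto
    ultimately show ?thesis using x xy by (simp add: power_divide mult_left_mono)
  qed
  have "(\<Sum>S\<in>{S \<in> F. \<kappa> < card S}. x ^ card S) \<le> (x / y) ^ \<kappa> * (\<Sum>S\<in>{S \<in> F. \<kappa> < card S}. y ^ card S)"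
    using term_le by (auto simp: sum_distrib_left intro!: sum_mono)
  also have "\<dots> \<le> (x / y) ^ \<kappa> * (\<Sum>S\<in>F. y ^ card S)"
    using x xy F by (intro mult_left_mono sum_mono2) auto
  finally show ?thesis .
qed

lemma upward_closed_small_weight_le:
  fixes x :: real
  assumes A: "finite A" and F: "upward_closed_in A F" and \<kappa>: "\<kappa> \<le> card A" and x: "0 \<le> x"
  shows "(\<Sum>S\<in>{S \<in> F. card S \<le> \<kappa>}. x ^ card S)
    \<le> card {S \<in> F. card S = \<kappa>} / (card A choose \<kappa>) * (1 + x) ^ card A"
proof -
  define n where "n = card A"
  define p where "p = card {S \<in> F. card S = \<kappa>} / (n choose \<kappa>)"
  define F\<^sub>\<kappa> where "F\<^sub>\<kappa> = {S \<in> F. card S \<le> \<kappa>}"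
  have "(\<Sum>S\<in>F\<^sub>\<kappa>. x ^ card S) = (\<Sum>k\<le>\<kappa>. \<Sum>S\<in>{S \<in> F\<^sub>\<kappa>. card S = k}. x ^ card S)"
    using finite_upward_closed_in[OF A F] by (intro sum.group[symmetric]) (auto simp: F\<^sub>\<kappa>_def)
  also have "\<dots> = (\<Sum>k\<le>\<kappa>. card {S \<in> F. card S = k} * x ^ k)"
  proof (rule sum.cong)
    fix k assume "k \<in> {..\<kappa>}"
    then have "{S \<in> F\<^sub>\<kappa>. card S = k} = {S \<in> F. card S = k}" by (auto simp: F\<^sub>\<kappa>_def)
    then show "(\<Sum>S\<in>{S \<in> F\<^sub>\<kappa>. card S = k}. x ^ card S) = card {S \<in> F. card S = k} * x ^ k"
      by simp
  qed simp
  also have "\<dots> \<le> (\<Sum>k\<le>\<kappa>. p * ((n choose k) * x ^ k))"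
  proof (rule sum_mono)
    fix k assume "k \<in> {..\<kappa>}"
    then have "real (card {S \<in> F. card S = k}) * (n choose \<kappa>) \<le> card {S \<in> F. card S = \<kappa>} * (n choose k)"
      using card_slice_binomial_mono[OF A F, of k \<kappa>] by (simp add: n_def flip: of_nat_mult)
    then have "card {S \<in> F. card S = k} \<le> p * (n choose k)"
      using \<kappa> by (simp add: p_def n_def field_simps)
    then show "card {S \<in> F. card S = k} * x ^ k \<le> p * ((n choose k) * x ^ k)"
      using x by (simp add: mult_right_mono mult.assoc[symmetric])
  qed
  also have "\<dots> \<le> p * (\<Sum>k\<le>n. (n choose k) * x ^ k)"
    using x \<kappa> by (auto simp: p_def n_def sum_distrib_left intro!: mult_left_mono sum_mono2)
  also have "\<dots> = p * (1 + x) ^ n"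
    using binomial_ring[of x 1 n] by (simp add: add.commute)
  finally show ?thesis by (simp add: F\<^sub>\<kappa>_def p_def n_def)
qed

lemma upward_closed_weight_bound:
  fixes x y :: real
  assumes A: "finite A" and F: "upward_closed_in A F" and \<kappa>: "\<kappa> \<le> card A"
    and x: "0 < x" and xy: "x \<le> y"
  shows "(\<Sum>S\<in>F. x ^ card S) - (x / y) ^ \<kappa> * (\<Sum>S\<in>F. y ^ card S)
    \<le> card {S \<in> F. card S = \<kappa>} / (card A choose \<kappa>) * (1 + x) ^ card A"
proof -
  have "(\<Sum>S\<in>F. x ^ card S) = (\<Sum>S\<in>{S \<in> F. card S \<le> \<kappa>}. x ^ card S) + (\<Sum>S\<in>{S \<in> F. \<kappa> < card S}. x ^ card S)"
    using finite_upward_closed_in[OF A F]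
    by (subst sum.union_disjoint[symmetric]) (auto intro: sum.cong)
  then show ?thesis
    using upward_closed_small_weight_le[OF A F \<kappa>, of x] sum_power_card_large_le[OF finite_upward_closed_in[OF A F] x xy, of \<kappa>] x
    by simp
qed

section \<open>The weight of the good sets\<close>

lemma bij_betw_Sigma_row_set:
  "bij_betw (Sigma I) (I \<rightarrow>\<^sub>E {R \<in> Pow J. Q R}) {S \<in> Pow (I \<times> J). \<forall>i\<in>I. Q (row_set S i)}"
proof (rule bij_betw_byWitness[where f' = "\<lambda>S. restrict (row_set S) I"])
  have row_Sigma: "row_set (Sigma I g) i = g i" if "i \<in> I" for g :: "'a \<Rightarrow> 'b set" and i
    using that by (simp add: row_set_def)
  show "\<forall>g\<in>I \<rightarrow>\<^sub>E {R \<in> Pow J. Q R}. restrict (row_set (Sigma I g)) I = g"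
  proof
    fix g assume g: "g \<in> I \<rightarrow>\<^sub>E {R \<in> Pow J. Q R}"
    show "restrict (row_set (Sigma I g)) I = g"
    proof
      fix i show "restrict (row_set (Sigma I g)) I i = g i"
        using row_Sigma PiE_arb[OF g] by (cases "i \<in> I") simp_all
    qed
  qed
  show "Sigma I ` (I \<rightarrow>\<^sub>E {R \<in> Pow J. Q R}) \<subseteq> {S \<in> Pow (I \<times> J). \<forall>i\<in>I. Q (row_set S i)}"
    by (auto simp: PiE_iff row_Sigma)
qed (auto simp: row_set_def)

lemma sum_power_card_rowwise:
  fixes x :: "'b::comm_semiring_1"
  assumes I: "finite I" and J: "finite J"
  shows "(\<Sum>S\<in>{S \<in> Pow (I \<times> J). \<forall>i\<in>I. Q (row_set S i)}. x ^ card S)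
       = (\<Sum>R\<in>{R \<in> Pow J. Q R}. x ^ card R) ^ card I"
proof -
  define RQ where "RQ = {R \<in> Pow J. Q R}"
  have "(\<Sum>S\<in>{S \<in> Pow (I \<times> J). \<forall>i\<in>I. Q (row_set S i)}. x ^ card S) = (\<Sum>g\<in>I \<rightarrow>\<^sub>E RQ. x ^ card (Sigma I g))"
    using sum.reindex_bij_betw[OF bij_betw_Sigma_row_set[of I J Q], where g = "\<lambda>S. x ^ card S"] by (simp add: RQ_def)
  also have "\<dots> = (\<Sum>g\<in>I \<rightarrow>\<^sub>E RQ. \<Prod>i\<in>I. x ^ card (g i))"
  proof (rule sum.cong)
    fix g assume "g \<in> I \<rightarrow>\<^sub>E RQ"
    then have "\<forall>i\<in>I. finite (g i)" using J by (auto simp: RQ_def dest: finite_subset[OF _ J])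
    then show "x ^ card (Sigma I g) = (\<Prod>i\<in>I. x ^ card (g i))"
      using I by (simp add: card_SigmaI power_sum)
  qed simp
  also have "\<dots> = (\<Sum>R\<in>RQ. x ^ card R) ^ card I"
    using prod_sum_PiE[OF I, of "\<lambda>_. RQ" "\<lambda>_ R. x ^ card R"] J by (simp add: RQ_def)
  finally show ?thesis by (simp add: RQ_def)
qed

lemma sum_power_card_ge2:
  fixes x :: "'b::comm_ring_1"
  assumes J: "finite J"
  shows "(\<Sum>R\<in>{R \<in> Pow J. 2 \<le> card R}. x ^ card R) = (1 + x) ^ card J - 1 - of_nat (card J) * x"
proof -
  have small: "{R \<in> Pow J. \<not> 2 \<le> card R} = insert {} ((\<lambda>j. {j}) ` J)"
  proof (intro equalityI subsetI)
    fix R assume "R \<in> {R \<in> Pow J. \<not> 2 \<le> card R}"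
    then have "R \<subseteq> J" "finite R" "card R = 0 \<or> card R = 1" using J by (auto dest: finite_subset[OF _ J])
    then show "R \<in> insert {} ((\<lambda>j. {j}) ` J)" by (auto simp: card_1_singleton_iff)
  qed auto
  have parts: "{R \<in> Pow J. 2 \<le> card R} \<union> {R \<in> Pow J. \<not> 2 \<le> card R} = Pow J"
    by blast
  have "(1 + x) ^ card J = (\<Sum>R\<in>{R \<in> Pow J. 2 \<le> card R} \<union> {R \<in> Pow J. \<not> 2 \<le> card R}. x ^ card R)"
    by (simp only: parts sum_power_card_Pow[OF J])
  also have "\<dots> = (\<Sum>R\<in>{R \<in> Pow J. 2 \<le> card R}. x ^ card R) + (\<Sum>R\<in>{R \<in> Pow J. \<not> 2 \<le> card R}. x ^ card R)"
    by (rule sum.union_disjoint) (use J in auto)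
  also have "(\<Sum>R\<in>{R \<in> Pow J. \<not> 2 \<le> card R}. x ^ card R) = 1 + of_nat (card J) * x"
  proof -
    have "(\<Sum>R\<in>(\<lambda>j. {j}) ` J. x ^ card R) = of_nat (card J) * x"
      by (simp add: sum.reindex inj_on_def)
    then show ?thesis using J unfolding small by (subst sum.insert) auto
  qed
  finally show ?thesis by (simp add: algebra_simps)
qed

lemma upward_closed_good_sets: "upward_closed_in (cells \<beta> \<gamma>) (good_sets \<beta> \<gamma>)"
proof -
  have "2 \<le> card (row_set (insert p S) i)" if "S \<subseteq> cells \<beta> \<gamma>" "2 \<le> card (row_set S i)" for S p i
  proof -
    have "row_set (insert p S) i \<subseteq> insert (snd p) {0..<\<gamma>}"
      using that by (auto simp: row_set_def)
    then have "card (row_set S i) \<le> card (row_set (insert p S) i)"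
      by (intro card_mono) (auto simp: row_set_def dest: finite_subset)
    with that(2) show ?thesis by linarith
  qed
  then show ?thesis
    unfolding upward_closed_in_def good_sets_def by auto
qed

lemma sum_power_card_good_sets:
  fixes x :: real
  shows "(\<Sum>S\<in>good_sets \<beta> \<gamma>. x ^ card S) = ((1 + x) ^ \<gamma> - 1 - real \<gamma> * x) ^ \<beta>"
  using sum_power_card_rowwise[where I = "{0..<\<beta>}" and J = "{0..<\<gamma>}" and x = x
      and Q = "\<lambda>R. 2 \<le> card R"]
    sum_power_card_ge2[where J = "{0..<\<gamma>}" and x = x]
  by (simp add: good_sets_def)

lemma f_two_point_bound:
  fixes x y :: real
  assumes "\<kappa> \<le> \<beta> * \<gamma>" "0 < x" "x \<le> y"
  shows "((1 + x) ^ \<gamma> - 1 - real \<gamma> * x) ^ \<beta> - (x / y) ^ \<kappa> * ((1 + y) ^ \<gamma> - 1 - real \<gamma> * y) ^ \<beta>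
    \<le> f \<beta> \<gamma> \<kappa> * (1 + x) ^ (\<beta> * \<gamma>)"
proof -
  have cells: "finite (cells \<beta> \<gamma>)" "card (cells \<beta> \<gamma>) = \<beta> * \<gamma>"
    by (simp_all add: card_cartesian_product)
  have "f \<beta> \<gamma> \<kappa> = card {S \<in> good_sets \<beta> \<gamma>. card S = \<kappa>} / (card (cells \<beta> \<gamma>) choose \<kappa>)"
    unfolding f_def card_good_matrices card_matrices_with_ones cells(2) ..
  then show ?thesis
    using upward_closed_weight_bound[OF cells(1) upward_closed_good_sets, where \<kappa> = \<kappa> and x = x and y = y] assms
    unfolding sum_power_card_good_sets cells(2) by simp
qed

section \<open>Rows with fewer than two 1's\<close>

text \<open>\<open>few_ones \<gamma> x\<close> is the probability that a row of \<open>\<gamma>\<close> independent cells, each equal to 1 with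
  probability \<open>x / (1 + x)\<close>, contains fewer than two 1's.\<close>
definition few_ones :: "nat \<Rightarrow> real \<Rightarrow> real" where
  "few_ones \<gamma> x = (1 + real \<gamma> * x) / (1 + x) ^ \<gamma>"

lemma exp_le_one_plus_power:
  fixes t :: real
  assumes "0 \<le> t" "t \<le> 1"
  shows "exp (real n * (t - t\<^sup>2)) \<le> (1 + t) ^ n"
proof -
  have "exp (real n * (t - t\<^sup>2)) \<le> exp (real n * ln (1 + t))"
    using ln_one_plus_pos_lower_bound[OF assms] by (intro exp_le_cancel_iff[THEN iffD2] mult_left_mono) auto
  also have "\<dots> = (1 + t) ^ n"
    using assms by (simp add: exp_of_nat_mult)
  finally show ?thesis .
qed

lemma inverse_one_plus_power_le:
  fixes a :: real
  assumes "0 \<le> a" "a \<le> real \<gamma>"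
  shows "1 / (1 + a / \<gamma>) ^ \<gamma> \<le> exp (a\<^sup>2 / \<gamma> - a)"
proof (cases "\<gamma> = 0")
  case False
  have "real \<gamma> * (a / \<gamma> - (a / \<gamma>)\<^sup>2) = a - a\<^sup>2 / \<gamma>"
    using False by (simp add: power2_eq_square field_simps)
  moreover have "exp (real \<gamma> * (a / \<gamma> - (a / \<gamma>)\<^sup>2)) \<le> (1 + a / \<gamma>) ^ \<gamma>"
    using assms False by (intro exp_le_one_plus_power) auto
  ultimately have "exp (a - a\<^sup>2 / \<gamma>) \<le> (1 + a / \<gamma>) ^ \<gamma>"
    by simp
  moreover have "0 \<le> a / \<gamma>" using assms by simp
  ultimately have "1 / (1 + a / \<gamma>) ^ \<gamma> \<le> 1 / exp (a - a\<^sup>2 / \<gamma>)"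
    by (intro divide_left_mono) auto
  then show ?thesis by (simp add: exp_diff)
next
  case True
  with assms have "a = 0" by simp
  with True show ?thesis by simp
qed

lemma few_ones_le_one:
  fixes x :: real
  assumes "0 \<le> x"
  shows "few_ones \<gamma> x \<le> 1"
  using Bernoulli_inequality[of x \<gamma>] assms by (simp add: few_ones_def)

lemma power_minus_linear_eq_few_ones:
  fixes x :: real
  assumes "0 \<le> x"
  shows "(1 + x) ^ \<gamma> - 1 - real \<gamma> * x = (1 + x) ^ \<gamma> * (1 - few_ones \<gamma> x)"
  using assms by (simp add: few_ones_def right_diff_distrib)

lemma has_real_derivative_few_ones:
  fixes z :: real
  assumes "0 < z"
  shows "(few_ones (Suc m) has_real_derivative - (real (Suc m) * real m * z / (1 + z) ^ (Suc m + 1))) (at z)"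
proof -
  have z: "0 < 1 + z" using assms by simp
  have "(few_ones (Suc m) has_real_derivative
      (real (Suc m) * (1 + z) ^ Suc m - (1 + real (Suc m) * z) * ((1 + real m) * (1 * (1 + z) ^ m)))
        / ((1 + z) ^ Suc m * (1 + z) ^ Suc m)) (at z)"
  proof (unfold few_ones_def[abs_def], rule DERIV_divide)
    show "((\<lambda>w. 1 + real (Suc m) * w) has_real_derivative real (Suc m)) (at z)"
      by (auto intro!: derivative_eq_intros)
    show "((\<lambda>w. (1 + w) ^ Suc m) has_real_derivative (1 + real m) * (1 * (1 + z) ^ m)) (at z)"
      by (rule DERIV_power_Suc) (auto intro!: derivative_eq_intros)
  qed (use z in simp)
  moreover have "(real (Suc m) * (1 + z) ^ Suc m - (1 + real (Suc m) * z) * ((1 + real m) * (1 * (1 + z) ^ m)))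
        / ((1 + z) ^ Suc m * (1 + z) ^ Suc m) = - (real (Suc m) * real m * z / (1 + z) ^ (Suc m + 1))"
  proof -
    have "real (Suc m) * (1 + z) ^ Suc m - (1 + real (Suc m) * z) * ((1 + real m) * (1 * (1 + z) ^ m))
        = - (real (Suc m) * real m * z) * (1 + z) ^ m"
      by (simp add: algebra_simps)
    moreover have "(1 + z) ^ Suc m * (1 + z) ^ Suc m = (1 + z) ^ (Suc m + 1) * (1 + z) ^ m"
      by (simp add: algebra_simps)
    ultimately show ?thesis
      using z by (simp add: nonzero_mult_divide_mult_cancel_right)
  qed
  ultimately show ?thesis by simp
qed

lemma few_ones_diff_le:
  fixes x y :: real
  assumes "1 \<le> \<gamma>" "0 < x" "x < y"
  shows "few_ones \<gamma> x - few_ones \<gamma> y \<le> (y - x) * (real \<gamma>)\<^sup>2 * y / (1 + x) ^ \<gamma>"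
proof -
  obtain m where m: "\<gamma> = Suc m" using assms(1) by (cases \<gamma>) auto
  have deriv: "(few_ones \<gamma> has_real_derivative - (real (Suc m) * real m * w / (1 + w) ^ (Suc m + 1))) (at w)"
    if "x \<le> w" "w \<le> y" for w
    using has_real_derivative_few_ones[of w m] assms(2) that m by simp
  obtain z where z: "x < z" "z < y"
    and mvt: "few_ones \<gamma> y - few_ones \<gamma> x = (y - x) * - (real (Suc m) * real m * z / (1 + z) ^ (Suc m + 1))"
    using MVT2[OF \<open>x < y\<close> deriv] by blast
  have "real (Suc m) * real m * z \<le> (real (Suc m))\<^sup>2 * y"
    using z assms by (intro mult_mono) (auto simp: power2_eq_square)
  moreover have "(1 + x) ^ Suc m \<le> (1 + z) ^ (Suc m + 1)"
    using assms z by (intro order_trans[OF power_mono power_increasing]) auto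
  ultimately have "real (Suc m) * real m * z / (1 + z) ^ (Suc m + 1) \<le> (real (Suc m))\<^sup>2 * y / (1 + x) ^ Suc m"
    using assms z by (intro frac_le) auto
  then have "(y - x) * (real (Suc m) * real m * z / (1 + z) ^ (Suc m + 1))
      \<le> (y - x) * ((real (Suc m))\<^sup>2 * y / (1 + x) ^ Suc m)"
    using assms by (intro mult_left_mono) auto
  then show ?thesis
    using mvt m by (simp add: algebra_simps)
qed

lemma f_ge_two_point:
  fixes x y :: real
  assumes "\<kappa> \<le> \<beta> * \<gamma>" "0 < x" "x \<le> y"
  shows "(1 - few_ones \<gamma> x) ^ \<beta> - (x / y) ^ \<kappa> * ((1 + y) / (1 + x)) ^ (\<beta> * \<gamma>) * (1 - few_ones \<gamma> y) ^ \<beta>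
    \<le> f \<beta> \<gamma> \<kappa>"
proof -
  define P where "P = (1 + x) ^ (\<beta> * \<gamma>)"
  have P: "0 < P" using assms by (simp add: P_def)
  have "((1 + x) ^ \<gamma> - 1 - real \<gamma> * x) ^ \<beta> = P * (1 - few_ones \<gamma> x) ^ \<beta>"
    using assms by (simp add: P_def power_minus_linear_eq_few_ones power_mult_distrib
        mult.commute[of \<beta>] power_mult)
  moreover have "((1 + y) ^ \<gamma> - 1 - real \<gamma> * y) ^ \<beta> = P * ((1 + y) / (1 + x)) ^ (\<beta> * \<gamma>) * (1 - few_ones \<gamma> y) ^ \<beta>"
    using assms by (simp add: P_def power_minus_linear_eq_few_ones power_mult_distrib power_divide
        mult.commute[of \<beta>] power_mult)
  ultimately have "P * ((1 - few_ones \<gamma> x) ^ \<beta> - (x / y) ^ \<kappa> * ((1 + y) / (1 + x)) ^ (\<beta> * \<gamma>) * (1 - few_ones \<gamma> y) ^ \<beta>)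
      \<le> P * f \<beta> \<gamma> \<kappa>"
    using f_two_point_bound[OF assms] by (simp add: P_def algebra_simps)
  then show ?thesis using P by simp
qed

lemma two_point_error_le:
  fixes x y s t :: real
  assumes x: "0 < x" and s: "0 < s" "s \<le> 1" and y: "y = x * (1 + s)"
    and decr: "few_ones \<gamma> x - few_ones \<gamma> y \<le> t * (1 - few_ones \<gamma> x)"
  shows "(x / y) ^ \<kappa> * ((1 + y) / (1 + x)) ^ (\<beta> * \<gamma>) * (1 - few_ones \<gamma> y) ^ \<beta>
    \<le> (1 - few_ones \<gamma> x) ^ \<beta> * exp (real \<beta> * (real \<gamma> * x * s + t) - real \<kappa> * (s - s\<^sup>2))"
proof -
  have hx: "0 \<le> 1 - few_ones \<gamma> x" and hy: "0 \<le> 1 - few_ones \<gamma> y"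
    using few_ones_le_one x s y by (auto simp: zero_le_mult_iff)
  have "(x / y) ^ \<kappa> = 1 / (1 + s) ^ \<kappa>"
    using x s y by (simp add: power_divide)
  also have "\<dots> \<le> 1 / exp (real \<kappa> * (s - s\<^sup>2))"
    using exp_le_one_plus_power[of s \<kappa>] s by (intro divide_left_mono) auto
  finally have A: "(x / y) ^ \<kappa> \<le> exp (- (real \<kappa> * (s - s\<^sup>2)))"
    by (metis exp_minus inverse_eq_divide)
  have "(1 + y) / (1 + x) \<le> exp (x * s)"
  proof -
    have "1 + y \<le> (1 + x) * (1 + x * s)" using x s y by (simp add: algebra_simps)
    also have "\<dots> \<le> (1 + x) * exp (x * s)" using x by (intro mult_left_mono exp_ge_add_one_self) auto
    finally show ?thesis using x by (simp add: field_simps)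
  qed
  then have "((1 + y) / (1 + x)) ^ (\<beta> * \<gamma>) \<le> exp (x * s) ^ (\<beta> * \<gamma>)"
    using x y s by (intro power_mono) auto
  then have B: "((1 + y) / (1 + x)) ^ (\<beta> * \<gamma>) \<le> exp (real \<beta> * (real \<gamma> * x * s))"
    by (simp add: mult_ac flip: exp_of_nat_mult)
  have "1 - few_ones \<gamma> y \<le> (1 - few_ones \<gamma> x) * exp t"
  proof -
    have "1 - few_ones \<gamma> y \<le> (1 - few_ones \<gamma> x) * (1 + t)" using decr by (simp add: algebra_simps)
    also have "\<dots> \<le> (1 - few_ones \<gamma> x) * exp t" using hx by (intro mult_left_mono) auto
    finally show ?thesis .
  qed
  then have "(1 - few_ones \<gamma> y) ^ \<beta> \<le> ((1 - few_ones \<gamma> x) * exp t) ^ \<beta>"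
    using hy by (rule power_mono)
  then have C: "(1 - few_ones \<gamma> y) ^ \<beta> \<le> (1 - few_ones \<gamma> x) ^ \<beta> * exp (real \<beta> * t)"
    by (simp add: power_mult_distrib exp_of_nat_mult)
  have "(x / y) ^ \<kappa> * ((1 + y) / (1 + x)) ^ (\<beta> * \<gamma>) * (1 - few_ones \<gamma> y) ^ \<beta>
    \<le> exp (- (real \<kappa> * (s - s\<^sup>2))) * exp (real \<beta> * (real \<gamma> * x * s)) * ((1 - few_ones \<gamma> x) ^ \<beta> * exp (real \<beta> * t))"
    using A B C x y s hy by (intro mult_mono) auto
  also have "\<dots> = (1 - few_ones \<gamma> x) ^ \<beta> * exp (real \<beta> * (real \<gamma> * x * s + t) - real \<kappa> * (s - s\<^sup>2))"
    by (simp add: distrib_left mult_ac flip: exp_add)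
  finally show ?thesis .
qed

lemma f_ge_perturbed_point:
  fixes x s t :: real
  assumes \<kappa>: "\<kappa> \<le> \<beta> * \<gamma>" and x: "0 < x" and s: "0 < s" "s \<le> 1"
    and decr: "few_ones \<gamma> x - few_ones \<gamma> (x * (1 + s)) \<le> t * (1 - few_ones \<gamma> x)"
  shows "(1 - exp (real \<beta> * (real \<gamma> * x * s + t) - real \<kappa> * (s - s\<^sup>2))) * (1 - few_ones \<gamma> x) ^ \<beta>
    \<le> f \<beta> \<gamma> \<kappa>"
proof -
  define y where "y = x * (1 + s)"
  have "(1 - few_ones \<gamma> x) ^ \<beta> - (x / y) ^ \<kappa> * ((1 + y) / (1 + x)) ^ (\<beta> * \<gamma>) * (1 - few_ones \<gamma> y) ^ \<beta>
      \<le> f \<beta> \<gamma> \<kappa>"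
    using \<kappa> x s by (intro f_ge_two_point) (auto simp: y_def)
  moreover have "(x / y) ^ \<kappa> * ((1 + y) / (1 + x)) ^ (\<beta> * \<gamma>) * (1 - few_ones \<gamma> y) ^ \<beta>
      \<le> (1 - few_ones \<gamma> x) ^ \<beta> * exp (real \<beta> * (real \<gamma> * x * s + t) - real \<kappa> * (s - s\<^sup>2))"
    using two_point_error_le[OF x s y_def] decr by (simp add: y_def)
  ultimately show ?thesis by (simp add: algebra_simps)
qed

lemma few_ones_bounds_at_scale:
  fixes a c s \<theta> :: real
  assumes \<gamma>: "1 \<le> \<gamma>" and a: "0 < a" "a \<le> c" "a \<le> real \<gamma>" and s: "0 < s" "s \<le> 1"
    and \<theta>: "0 \<le> \<theta>" "\<theta> \<le> 1/2" "c - \<theta> \<le> a - a\<^sup>2 / \<gamma>" and c_le_exp: "6 * (1 + c) \<le> exp c"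
  shows "(1 + c) * exp (- c) * (1 + 2 * \<theta>) \<le> 1/3"
    and "few_ones \<gamma> (a / \<gamma>) \<le> (1 + c) * exp (- c) * (1 + 2 * \<theta>)"
    and "few_ones \<gamma> (a / \<gamma>) - few_ones \<gamma> (a / \<gamma> * (1 + s))
      \<le> s * (12 * c\<^sup>2 * exp (- c)) * (1 - few_ones \<gamma> (a / \<gamma>))"
proof -
  define x where "x = a / \<gamma>"
  have x: "0 < x" and \<gamma>x: "real \<gamma> * x = a" using a \<gamma> by (auto simp: x_def)
  have "1 / (1 + x) ^ \<gamma> \<le> exp (a\<^sup>2 / \<gamma> - a)"
    unfolding x_def using a by (intro inverse_one_plus_power_le) auto
  also have "\<dots> \<le> exp (\<theta> - c)" using \<theta> by simp
  also have "\<dots> \<le> (1 + 2 * \<theta>) * exp (- c)"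
    using exp_bound_lemma[of \<theta>] \<theta> by (simp add: exp_diff exp_minus field_simps)
  finally have inv: "1 / (1 + x) ^ \<gamma> \<le> (1 + 2 * \<theta>) * exp (- c)" .
  have "few_ones \<gamma> x = (1 + a) * (1 / (1 + x) ^ \<gamma>)" by (simp add: few_ones_def \<gamma>x)
  also have "\<dots> \<le> (1 + c) * ((1 + 2 * \<theta>) * exp (- c))"
    using a inv x by (intro mult_mono) auto
  finally show hx: "few_ones \<gamma> (a / \<gamma>) \<le> (1 + c) * exp (- c) * (1 + 2 * \<theta>)"
    by (simp add: x_def mult_ac)
  have "(1 + c) * exp (- c) \<le> 1/6" using c_le_exp by (simp add: exp_minus field_simps)
  then have "(1 + c) * exp (- c) * (1 + 2 * \<theta>) \<le> 1/6 * 2"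
    using \<theta> by (intro mult_mono) auto
  then show u_third: "(1 + c) * exp (- c) * (1 + 2 * \<theta>) \<le> 1/3" by simp
  with hx have third: "1/3 \<le> 1 - few_ones \<gamma> x" by (simp add: x_def)
  have "(1 + 2 * \<theta>) * exp (- c) \<le> 2 * exp (- c)"
    using \<theta> by (intro mult_right_mono) auto
  with inv have inv2: "1 / (1 + x) ^ \<gamma> \<le> 2 * exp (- c)" by linarith
  have "few_ones \<gamma> x - few_ones \<gamma> (x * (1 + s)) \<le> (x * (1 + s) - x) * (real \<gamma>)\<^sup>2 * (x * (1 + s)) / (1 + x) ^ \<gamma>"
    using x s \<gamma> by (intro few_ones_diff_le) auto
  also have "\<dots> = (a * s) * (a * (1 + s)) * (1 / (1 + x) ^ \<gamma>)"
    by (simp add: power2_eq_square \<gamma>x[symmetric] algebra_simps add_divide_distrib)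
  also have "\<dots> \<le> (c * s) * (c * 2) * (2 * exp (- c))"
    using a s inv2 x by (intro mult_mono) auto
  also have "\<dots> = s * (12 * c\<^sup>2 * exp (- c)) * (1/3)" by (simp add: power2_eq_square)
  also have "\<dots> \<le> s * (12 * c\<^sup>2 * exp (- c)) * (1 - few_ones \<gamma> x)"
    using s third by (intro mult_left_mono) auto
  finally show "few_ones \<gamma> (a / \<gamma>) - few_ones \<gamma> (a / \<gamma> * (1 + s))
      \<le> s * (12 * c\<^sup>2 * exp (- c)) * (1 - few_ones \<gamma> (a / \<gamma>))"
    by (simp add: x_def)
qed

lemma f_ge_few_ones:
  fixes c K :: real
  assumes \<gamma>: "1 \<le> \<gamma>" and \<beta>: "1 \<le> \<beta>" and \<kappa>: "real \<kappa> = real \<beta> * c" and c: "1 \<le> c" and K: "0 < K"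
    and c_sq_le_exp: "96 * c\<^sup>2 \<le> exp c" and c_le_exp: "6 * (1 + c) \<le> exp c"
    and \<beta>_large: "4 * c * K / \<beta> \<le> 1/64" and \<gamma>_large: "c\<^sup>2 / \<gamma> \<le> 1/4"
  shows "(1 - exp (- K)) * (1 - (1 + c) * exp (- c)
      * (1 + 2 * (12 * c\<^sup>2 * exp (- c) + sqrt (4 * c * K / \<beta>) + c\<^sup>2 / \<gamma>))) ^ \<beta> \<le> f \<beta> \<gamma> \<kappa>"
proof -
  \<comment> \<open>The point is \<open>x = a / \<gamma>\<close> and \<open>y = x (1 + s)\<close>: \<open>d\<^sub>1\<close> pays for the decrease of \<open>few_ones\<close>
    from \<open>x\<close> to \<open>y\<close>, and \<open>d\<^sub>0\<close>, \<open>s\<close> are chosen to make the error exponent exactly \<open>- K\<close>.\<close>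
  define d\<^sub>1 where "d\<^sub>1 = 12 * c\<^sup>2 * exp (- c)"
  define d\<^sub>0 where "d\<^sub>0 = sqrt (4 * c * K / \<beta>)"
  define \<theta> where "\<theta> = d\<^sub>1 + d\<^sub>0 + c\<^sup>2 / \<gamma>"
  define a where "a = c - d\<^sub>1 - d\<^sub>0"
  define s where "s = d\<^sub>0 / (2 * c)"
  have d\<^sub>1: "0 \<le> d\<^sub>1" "d\<^sub>1 \<le> 1/8"
    using c_sq_le_exp by (simp_all add: d\<^sub>1_def exp_minus field_simps)
  have "0 < 4 * c * K / \<beta>" using c K \<beta> by simp
  then have d\<^sub>0: "0 < d\<^sub>0" "d\<^sub>0\<^sup>2 = 4 * c * K / \<beta>" by (simp_all add: d\<^sub>0_def)
  have "d\<^sub>0\<^sup>2 \<le> (1/8)\<^sup>2" unfolding d\<^sub>0(2) using \<beta>_large by (simp add: power2_eq_square)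
  then have "d\<^sub>0 \<le> 1/8" by (rule power2_le_imp_le) simp
  have "c \<le> c\<^sup>2" using c by (simp add: power2_eq_square)
  also have "\<dots> \<le> \<gamma> / 4" using \<gamma>_large \<gamma> by (simp add: field_simps)
  finally have c_le_\<gamma>: "c \<le> \<gamma> / 4" .
  have a: "0 < a" "a \<le> c" "a \<le> real \<gamma>"
    using c c_le_\<gamma> d\<^sub>1 d\<^sub>0 \<open>d\<^sub>0 \<le> 1/8\<close> by (auto simp: a_def)
  have "a\<^sup>2 / \<gamma> \<le> c\<^sup>2 / \<gamma>" using a by (intro divide_right_mono power_mono) auto
  then have \<theta>: "0 \<le> \<theta>" "\<theta> \<le> 1/2" "c - \<theta> \<le> a - a\<^sup>2 / \<gamma>"
    using d\<^sub>1 d\<^sub>0 \<open>d\<^sub>0 \<le> 1/8\<close> \<gamma>_large by (auto simp: \<theta>_def a_def)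
  have s: "0 < s" "s \<le> 1" using d\<^sub>0 \<open>d\<^sub>0 \<le> 1/8\<close> c by (auto simp: s_def)
  note row_bounds = few_ones_bounds_at_scale[OF \<gamma> a s \<theta> c_le_exp]
  have "real \<beta> * (real \<gamma> * (a / \<gamma>) * s + s * d\<^sub>1) - real \<kappa> * (s - s\<^sup>2) = real \<beta> * s * (a + d\<^sub>1 - c + c * s)"
    using \<gamma> by (simp add: \<kappa> power2_eq_square algebra_simps)
  also have "\<dots> = - K"
    using c d\<^sub>0 \<beta> by (simp add: a_def s_def power2_eq_square field_simps)
  finally have exponent: "real \<beta> * (real \<gamma> * (a / \<gamma>) * s + s * d\<^sub>1) - real \<kappa> * (s - s\<^sup>2) = - K" .
  have "real \<kappa> \<le> real \<beta> * real \<gamma>" using \<kappa> c_le_\<gamma> by (simp add: mult_left_mono)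
  then have \<kappa>_le: "\<kappa> \<le> \<beta> * \<gamma>" by (simp flip: of_nat_mult)
  have "0 < a / \<gamma>" using a \<gamma> by simp
  from f_ge_perturbed_point[OF \<kappa>_le this s row_bounds(3)[folded d\<^sub>1_def]]
  have "(1 - exp (- K)) * (1 - few_ones \<gamma> (a / \<gamma>)) ^ \<beta> \<le> f \<beta> \<gamma> \<kappa>"
    by (simp only: exponent)
  moreover have "(1 - (1 + c) * exp (- c) * (1 + 2 * \<theta>)) ^ \<beta> \<le> (1 - few_ones \<gamma> (a / \<gamma>)) ^ \<beta>"
    using row_bounds(1,2) by (intro power_mono) auto
  moreover have "0 \<le> 1 - exp (- K)" using K by simp
  ultimately show ?thesis
    unfolding \<theta>_def d\<^sub>1_def d\<^sub>0_def by (meson mult_left_mono order_trans)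
qed

section \<open>Absorbing the errors\<close>

lemma power_perturbation_ge:
  fixes u v w e :: real
  assumes base: "1/2 \<le> 1 - u - v"
    and e: "0 < e" "e \<le> 2" and n: "1 \<le> n" and small: "real n * (w - v) \<le> e / 4"
  shows "(1 - e / 2) * (1 - u - v) ^ n \<le> (1 - u - w) ^ n"
proof (cases "w \<le> v")
  case True
  then have "(1 - u - v) ^ n \<le> (1 - u - w) ^ n" using base by (intro power_mono) auto
  moreover have "(1 - e / 2) * (1 - u - v) ^ n \<le> (1 - u - v) ^ n"
    using e base by (simp add: mult_left_le_one_le)
  ultimately show ?thesis by linarith
next
  case False
  define t where "t = 2 * (w - v)"
  have "real n * t = 2 * (real n * (w - v))" by (simp add: t_def)
  with small have nt: "real n * t \<le> e / 2" by linarith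
  have "t \<le> real n * t" using False n by (simp add: t_def)
  with nt e have t: "0 \<le> t" "t \<le> 1" using False by (simp add: t_def, linarith)
  have "(1 - e / 2) * (1 - u - v) ^ n \<le> (1 - real n * t) * (1 - u - v) ^ n"
    using nt base by (intro mult_right_mono) auto
  also have "\<dots> \<le> (1 - t) ^ n * (1 - u - v) ^ n"
    using Bernoulli_inequality[of "- t" n] t base by (intro mult_right_mono) auto
  also have "\<dots> = ((1 - u - v) * (1 - t)) ^ n" by (simp add: power_mult_distrib mult.commute)
  also have "\<dots> \<le> (1 - u - w) ^ n"
  proof (rule power_mono)
    have "(1 - u - v) * t \<ge> t / 2" using mult_right_mono[OF base t(1)] by simp
    have "(1 - u - v) * (1 - t) = (1 - u - v) - (1 - u - v) * t" by (simp add: algebra_simps)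
    also have "\<dots> \<le> (1 - u - v) - t / 2" using \<open>(1 - u - v) * t \<ge> t / 2\<close> by linarith
    also have "\<dots> = 1 - u - w" by (simp add: t_def field_simps)
    finally show "(1 - u - v) * (1 - t) \<le> 1 - u - w" .
  qed (use base t in simp)
  finally show ?thesis .
qed

lemma cube_le_exp:
  fixes c :: real
  assumes "0 \<le> c"
  shows "c ^ 3 / 27 \<le> exp c"
proof -
  have "c / 3 \<le> exp (c / 3)" using exp_ge_add_one_self[of "c / 3"] by linarith
  then have "(c / 3) ^ 3 \<le> exp (c / 3) ^ 3"
    using assms by (intro power_mono) auto
  then show ?thesis by (simp add: power_divide flip: exp_of_nat_mult)
qed

lemma large_c_inequalities:
  fixes c :: real
  assumes c: "2600 \<le> c"
  shows "96 * c\<^sup>2 \<le> exp c" "6 * (1 + c) \<le> exp c" "4 * c ^ 4 \<le> exp (2 * c)" "72 * (1 + c) \<le> c\<^sup>2"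
proof -
  have "2592 * c\<^sup>2 \<le> c * c\<^sup>2" using c by (intro mult_right_mono) auto
  also have "c * c\<^sup>2 = c ^ 3" by (simp add: power2_eq_square power3_eq_cube)
  finally have "2592 * c\<^sup>2 \<le> c ^ 3" .
  then show exp_c: "96 * c\<^sup>2 \<le> exp c"
    using cube_le_exp[of c] c by linarith
  have "72 * (1 + c) \<le> 144 * c" using c by simp
  also have "\<dots> \<le> c * c" using c by (intro mult_right_mono) auto
  finally show "72 * (1 + c) \<le> c\<^sup>2" by (simp add: power2_eq_square)
  moreover have "0 \<le> c\<^sup>2" by simp
  ultimately have "6 * (1 + c) \<le> 96 * c\<^sup>2" by linarith
  with exp_c show "6 * (1 + c) \<le> exp c" by linarith
  have "4 * c ^ 4 \<le> (96 * c\<^sup>2) * (96 * c\<^sup>2)" using c by (simp add: power4_eq_xxxx power2_eq_square)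
  also have "\<dots> \<le> exp c * exp c" using exp_c by (intro mult_mono) auto
  finally show "4 * c ^ 4 \<le> exp (2 * c)" by (simp flip: exp_add)
qed

lemma le_eighth_add_square_div:
  fixes X e :: real
  assumes "0 < e"
  shows "X \<le> e / 8 + 2 * X\<^sup>2 / e"
proof -
  have "0 \<le> 2 * (X - e / 4)\<^sup>2 / e" using assms by simp
  also have "2 * (X - e / 4)\<^sup>2 / e = e / 8 + 2 * X\<^sup>2 / e - X"
    using assms by (simp add: power2_eq_square field_simps)
  finally show ?thesis by simp
qed

lemma correction_term_le:
  fixes c K \<epsilon> :: real
  assumes \<beta>: "1 \<le> \<beta>" and c: "1 \<le> c" and \<epsilon>: "0 < \<epsilon>" and K: "0 < K"
    and quadratic: "72 * (1 + c) \<le> c\<^sup>2" and cK: "48 * (1 + c)\<^sup>2 * K \<le> \<epsilon> * c ^ 3"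
    and c\<gamma>: "2 * \<beta> * (1 + c) * c\<^sup>2 * exp (- c) / \<gamma> \<le> \<epsilon> / 8"
  shows "real \<beta> * (2 * ((1 + c) * exp (- c)) * (12 * c\<^sup>2 * exp (- c) + sqrt (4 * c * K / \<beta>) + c\<^sup>2 / \<gamma>)
      - c ^ 4 * exp (- 2 * c)) \<le> \<epsilon> / 4"
proof -
  define b where "b = real \<beta>"
  define E where "E = exp (- c)"
  define u where "u = (1 + c) * E"
  define v where "v = c ^ 4 * E\<^sup>2"
  define X where "X = 2 * b * u * sqrt (4 * c * K / b)"
  have b: "1 \<le> b" using \<beta> by (simp add: b_def)
  have v_eq: "c ^ 4 * exp (- 2 * c) = v"
    by (simp add: v_def E_def power2_eq_square flip: exp_add)
  have first: "2 * b * u * (12 * c\<^sup>2 * E) \<le> b * v / 3"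
  proof -
    have "72 * ((1 + c) * c\<^sup>2) \<le> c ^ 4"
      using mult_right_mono[OF quadratic, of "c\<^sup>2"] by (simp add: algebra_simps)
    then have "24 * ((1 + c) * c\<^sup>2) \<le> c ^ 4 / 3" by linarith
    then have "24 * ((1 + c) * c\<^sup>2) * (b * E\<^sup>2) \<le> c ^ 4 / 3 * (b * E\<^sup>2)"
      using b by (intro mult_right_mono) auto
    then show ?thesis by (simp add: u_def v_def power2_eq_square algebra_simps)
  qed
  have "X \<le> \<epsilon> / 8 + 2 * X\<^sup>2 / \<epsilon>" using \<epsilon> by (rule le_eighth_add_square_div)
  also have "2 * X\<^sup>2 / \<epsilon> = 32 * b * u\<^sup>2 * c * K / \<epsilon>"
    using b c K by (simp add: X_def power_mult_distrib power2_eq_square field_simps)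
  also have "\<dots> \<le> 2 * b * v / 3"
  proof -
    have "48 * (1 + c)\<^sup>2 * K * c \<le> \<epsilon> * c ^ 3 * c" using cK c by (intro mult_right_mono) auto
    then have "32 * (1 + c)\<^sup>2 * c * K / \<epsilon> \<le> 2 * c ^ 4 / 3"
      using \<epsilon> by (simp add: field_simps power3_eq_cube power4_eq_xxxx)
    then have "32 * (1 + c)\<^sup>2 * c * K / \<epsilon> * (b * E\<^sup>2) \<le> 2 * c ^ 4 / 3 * (b * E\<^sup>2)"
      using b by (intro mult_right_mono) auto
    moreover have "u\<^sup>2 = (1 + c)\<^sup>2 * E\<^sup>2" by (simp add: u_def power_mult_distrib)
    ultimately show ?thesis by (simp add: v_def algebra_simps)
  qed
  finally have second: "X \<le> \<epsilon> / 8 + 2 * b * v / 3" by simp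
  have "2 * b * u * (c\<^sup>2 / \<gamma>) = 2 * \<beta> * (1 + c) * c\<^sup>2 * exp (- c) / \<gamma>"
    by (simp add: b_def u_def E_def algebra_simps add_divide_distrib)
  with c\<gamma> have third: "2 * b * u * (c\<^sup>2 / \<gamma>) \<le> \<epsilon> / 8" by linarith
  have "real \<beta> * (2 * ((1 + c) * exp (- c)) * (12 * c\<^sup>2 * exp (- c) + sqrt (4 * c * K / \<beta>) + c\<^sup>2 / \<gamma>)
      - c ^ 4 * exp (- 2 * c)) = 2 * b * u * (12 * c\<^sup>2 * E) + X + 2 * b * u * (c\<^sup>2 / \<gamma>) - b * v"
    by (simp add: b_def u_def E_def X_def v_eq[symmetric] algebra_simps)
  with first second third show ?thesis by linarith
qed

lemma f_ge_main_term:
  fixes c \<epsilon> :: real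
  assumes \<gamma>: "1 \<le> \<gamma>" and \<beta>: "1 \<le> \<beta>" and \<kappa>: "real \<kappa> = real \<beta> * c" and \<epsilon>: "0 < \<epsilon>" "\<epsilon> < 1"
    and c: "2600 \<le> c" and cK: "192 * ln (2 / \<epsilon>) \<le> \<epsilon> * c"
    and \<beta>_large: "4 * c * ln (2 / \<epsilon>) / \<beta> \<le> 1/64" and \<gamma>_large: "c\<^sup>2 / \<gamma> \<le> 1/4"
    and \<gamma>_vs_\<beta>: "2 * \<beta> * (1 + c) * c\<^sup>2 * exp (- c) / \<gamma> \<le> \<epsilon> / 8"
  shows "(1 - \<epsilon>) * (1 - (c + 1) * exp (- c) - c ^ 4 * exp (- 2 * c)) ^ \<beta> \<le> f \<beta> \<gamma> \<kappa>"
proof -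
  define K where "K = ln (2 / \<epsilon>)"
  define u where "u = (1 + c) * exp (- c)"
  define v where "v = c ^ 4 * exp (- 2 * c)"
  define w where "w = 2 * u * (12 * c\<^sup>2 * exp (- c) + sqrt (4 * c * K / \<beta>) + c\<^sup>2 / \<gamma>)"
  have K: "0 < K" "exp (- K) = \<epsilon> / 2" using \<epsilon> by (simp_all add: K_def exp_minus)
  note c_ineqs = large_c_inequalities[OF c]
  have u: "0 \<le> u" "u \<le> 1/6" using c c_ineqs(2) by (simp_all add: u_def exp_minus field_simps)
  have v: "0 \<le> v" "v \<le> 1/4"
    using c_ineqs(3) by (simp_all add: v_def exp_minus field_simps)
  have "(1 + c)\<^sup>2 \<le> (2 * c)\<^sup>2" using c by (intro power_mono) auto
  then have "48 * (1 + c)\<^sup>2 * K \<le> 48 * (2 * c)\<^sup>2 * K"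
    using K by (intro mult_right_mono) auto
  also have "\<dots> = 192 * K * c\<^sup>2" by (simp add: power2_eq_square)
  also have "\<dots> \<le> \<epsilon> * c * c\<^sup>2" using cK by (intro mult_right_mono) (auto simp: K_def)
  finally have "48 * (1 + c)\<^sup>2 * K \<le> \<epsilon> * c ^ 3" by (simp add: power2_eq_square power3_eq_cube)
  then have "real \<beta> * (w - v) \<le> \<epsilon> / 4"
    using correction_term_le[OF \<beta> _ \<epsilon>(1) K(1) c_ineqs(4) _ \<gamma>_vs_\<beta>] c by (simp add: w_def v_def u_def)
  then have "(1 - \<epsilon> / 2) * (1 - u - v) ^ \<beta> \<le> (1 - u - w) ^ \<beta>"
    using u v \<epsilon> \<beta> by (intro power_perturbation_ge) auto
  moreover have "(1 - \<epsilon> / 2) * (1 - u - w) ^ \<beta> \<le> f \<beta> \<gamma> \<kappa>"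
  proof -
    have "(1 - exp (- K)) * (1 - (1 + c) * exp (- c)
        * (1 + 2 * (12 * c\<^sup>2 * exp (- c) + sqrt (4 * c * K / \<beta>) + c\<^sup>2 / \<gamma>))) ^ \<beta> \<le> f \<beta> \<gamma> \<kappa>"
      by (rule f_ge_few_ones[OF \<gamma> \<beta> \<kappa> _ K(1) c_ineqs(1,2) _ \<gamma>_large])
        (use c \<beta>_large in \<open>simp_all add: K_def\<close>)
    moreover have "(1 + c) * exp (- c) * (1 + 2 * (12 * c\<^sup>2 * exp (- c) + sqrt (4 * c * K / \<beta>) + c\<^sup>2 / \<gamma>))
        = u + w"
      by (simp add: u_def w_def algebra_simps add_divide_distrib)
    ultimately show ?thesis by (metis K(2) diff_diff_eq)
  qed
  moreover have "1 - \<epsilon> \<le> (1 - \<epsilon> / 2) * (1 - \<epsilon> / 2)" by (simp add: algebra_simps)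
  moreover have "0 \<le> (1 - u - v) ^ \<beta>" "0 \<le> 1 - \<epsilon> / 2" using u v \<epsilon> by auto
  ultimately have "(1 - \<epsilon>) * (1 - u - v) ^ \<beta> \<le> f \<beta> \<gamma> \<kappa>"
    by (smt (verit, ccfv_threshold) mult_left_mono mult_right_mono mult.assoc)
  then show ?thesis by (simp add: u_def v_def add.commute)
qed

section \<open>The asymptotic regime\<close>

lemma linear_ratio_small:
  fixes b c K \<delta> :: real
  assumes \<delta>: "0 < \<delta>" and K: "0 < K" and b: "(512 * K / \<delta>)\<^sup>2 \<le> b" "1 \<le> b"
    and c: "0 \<le> c" "c \<le> ln b / \<delta>"
  shows "4 * c * K / b \<le> 1/64"
proof -
  have "ln b \<le> 2 * sqrt b" using ln_powr_bound[of b "1/2"] b by (simp add: powr_half_sqrt)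
  then have "ln b / \<delta> \<le> 2 * sqrt b / \<delta>" using \<delta> by (intro divide_right_mono) auto
  then have "4 * c * K \<le> 4 * (2 * sqrt b / \<delta>) * K" using c K by (intro mult_right_mono) auto
  also have "\<dots> = 8 * K / \<delta> * sqrt b" by simp
  also have "\<dots> \<le> sqrt b / 64 * sqrt b"
    using real_le_rsqrt[OF b(1)] K \<delta> b(2) by (intro mult_right_mono) (auto simp: field_simps)
  also have "\<dots> = b / 64" using b by simp
  finally show ?thesis using b by (simp add: field_simps)
qed

lemma square_ratio_small:
  fixes g c \<delta> :: real
  assumes \<delta>: "0 < \<delta>" and g: "(256 / \<delta>\<^sup>2)\<^sup>2 \<le> g" "1 \<le> g"
    and c: "0 \<le> c" "c \<le> 2 * ln g / \<delta>"
  shows "c\<^sup>2 / g \<le> 1/4"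
proof -
  define q where "q = g powr (1/4)"
  have "ln g \<le> 4 * q" using ln_powr_bound[of g "1/4"] g by (simp add: q_def)
  then have "2 * ln g / \<delta> \<le> 2 * (4 * q) / \<delta>" using \<delta> by (intro divide_right_mono) auto
  then have "c \<le> 8 / \<delta> * q" using c by simp
  then have "c\<^sup>2 \<le> (8 / \<delta> * q)\<^sup>2" using c by (intro power_mono) auto
  also have "\<dots> = 64 / \<delta>\<^sup>2 * sqrt g"
  proof -
    have "q\<^sup>2 = sqrt g" using g by (simp add: q_def power2_eq_square powr_half_sqrt flip: powr_add)
    then show ?thesis by (simp add: power_mult_distrib power_divide)
  qed
  also have "\<dots> \<le> sqrt g / 4 * sqrt g"
    using real_le_rsqrt[OF g(1)] \<delta> g(2) by (intro mult_right_mono) (auto simp: field_simps)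
  also have "\<dots> = g / 4" using g by simp
  finally show ?thesis using g by (simp add: field_simps)
qed

lemma mult_exp_minus_le_powr:
  fixes b c g \<delta> :: real
  assumes b: "0 < b" "ln b \<le> 2 * c" "b \<le> g powr (2 - \<delta>)" and g: "1 \<le> g"
  shows "b * exp (- c) \<le> g powr (1 - \<delta> / 2)"
proof -
  have "ln (sqrt b) \<le> c" using b by (simp add: ln_sqrt)
  then have "sqrt b \<le> exp c" using b by (metis exp_le_cancel_iff exp_ln real_sqrt_gt_0_iff)
  then have "b / exp c \<le> b / sqrt b" using b by (intro divide_left_mono) auto
  then have "b * exp (- c) \<le> sqrt b" using b by (simp add: exp_minus field_simps real_div_sqrt)
  also have "sqrt b \<le> sqrt (g powr (2 - \<delta>))" using b by simp
  also have "\<dots> = g powr (1 - \<delta> / 2)"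
    using g powr_half_sqrt_powr[of g "2 - \<delta>"] by (simp add: diff_divide_distrib)
  finally show ?thesis .
qed

lemma cube_le_powr_of_ln:
  fixes c g \<delta> :: real
  assumes \<delta>: "0 < \<delta>" and g: "1 \<le> g" and c: "0 \<le> c" "c \<le> 2 * ln g / \<delta>"
  shows "c ^ 3 \<le> (24 / \<delta>\<^sup>2) ^ 3 * g powr (\<delta> / 4)"
proof -
  have "ln g \<le> g powr (\<delta> / 12) / (\<delta> / 12)" using g \<delta> by (intro ln_powr_bound) auto
  then have "2 * ln g / \<delta> \<le> 2 * (g powr (\<delta> / 12) / (\<delta> / 12)) / \<delta>"
    using \<delta> by (intro divide_right_mono) auto
  also have "\<dots> = 24 / \<delta>\<^sup>2 * g powr (\<delta> / 12)" by (simp add: power2_eq_square)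
  finally have "c ^ 3 \<le> (24 / \<delta>\<^sup>2 * g powr (\<delta> / 12)) ^ 3" using c by (intro power_mono) auto
  also have "\<dots> = (24 / \<delta>\<^sup>2) ^ 3 * (g powr (\<delta> / 12)) ^ 3" by (rule power_mult_distrib)
  also have "(g powr (\<delta> / 12)) ^ 3 = g powr (\<delta> / 4)" using g by (simp add: powr_power)
  finally show ?thesis .
qed

lemma exponential_ratio_small:
  fixes b g c \<delta> e :: real
  assumes \<delta>: "0 < \<delta>" and e: "0 < e" and g: "(32 * (24 / \<delta>\<^sup>2) ^ 3 / e) powr (4 / \<delta>) \<le> g" "1 \<le> g"
    and b: "0 < b" "b \<le> g powr (2 - \<delta>)"
    and c: "1 \<le> c" "ln b \<le> 2 * c" "c \<le> 2 * ln g / \<delta>"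
  shows "2 * b * (1 + c) * c\<^sup>2 * exp (- c) / g \<le> e / 8"
proof -
  define A where "A = 24 / \<delta>\<^sup>2"
  have A: "0 < A" using \<delta> by (simp add: A_def)
  have "32 * A ^ 3 / e \<le> g powr (\<delta> / 4)"
  proof -
    have "((32 * A ^ 3 / e) powr (4 / \<delta>)) powr (\<delta> / 4) \<le> g powr (\<delta> / 4)"
      using g \<delta> by (intro powr_mono2) (auto simp: A_def)
    then show ?thesis using A e \<delta> by (simp add: powr_powr)
  qed
  have "2 * (1 + c) * c\<^sup>2 \<le> 4 * c ^ 3"
    using c by (simp add: power2_eq_square power3_eq_cube field_simps mult_right_mono)
  then have "2 * b * (1 + c) * c\<^sup>2 * exp (- c) / g \<le> 4 * c ^ 3 * (b * exp (- c)) / g"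
    using b g by (intro divide_right_mono) (auto simp: mult_ac intro!: mult_right_mono)
  \<comment> \<open>\<open>b exp (- c) \<le> sqrt b\<close> saves \<open>g powr (\<delta>/2)\<close> against \<open>g\<close>, of which the cube of \<open>c \<approx> ln g\<close>
    uses up only \<open>g powr (\<delta>/4)\<close>.\<close>
  also have "\<dots> \<le> 4 * (A ^ 3 * g powr (\<delta> / 4)) * g powr (1 - \<delta> / 2) / g"
    using cube_le_powr_of_ln[OF \<delta> g(2) _ c(3)] mult_exp_minus_le_powr[OF b(1) c(2) b(2) g(2)] b c g A
    by (intro divide_right_mono mult_mono) (auto simp: A_def)
  also have "\<dots> = 4 * A ^ 3 / g powr (\<delta> / 4)"
    using g by (simp add: field_simps flip: powr_add)
  also have "\<dots> \<le> e / 8"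
    using \<open>32 * A ^ 3 / e \<le> g powr (\<delta> / 4)\<close> A e g by (simp add: field_simps)
  finally show ?thesis .
qed

lemma regime_inequalities:
  fixes \<delta> e K :: real
  assumes \<delta>: "0 < \<delta>" and e: "0 < e" and K: "0 < K"
  obtains N :: real where "1 \<le> N"
    "\<And>b g c. N \<le> g \<Longrightarrow> g < b \<Longrightarrow> ln b / 2 < c \<Longrightarrow> c < ln b / \<delta> \<Longrightarrow> b < g powr (2 - \<delta>) \<Longrightarrow>
      2600 \<le> c \<and> 192 * K \<le> e * c \<and> 4 * c * K / b \<le> 1/64 \<and> c\<^sup>2 / g \<le> 1/4 \<and>
      2 * b * (1 + c) * c\<^sup>2 * exp (- c) / g \<le> e / 8"
proof -
  define c\<^sub>0 where "c\<^sub>0 = max 2600 (192 * K / e)"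
  define N where "N = max (exp (2 * c\<^sub>0))
    (max ((512 * K / \<delta>)\<^sup>2) (max ((256 / \<delta>\<^sup>2)\<^sup>2) ((32 * (24 / \<delta>\<^sup>2) ^ 3 / e) powr (4 / \<delta>))))"
  have "1 \<le> exp (2 * c\<^sub>0)" by (simp add: c\<^sub>0_def)
  then have N: "1 \<le> N" by (simp add: N_def le_max_iff_disj)
  have "2600 \<le> c \<and> 192 * K \<le> e * c \<and> 4 * c * K / b \<le> 1/64 \<and> c\<^sup>2 / g \<le> 1/4 \<and>
      2 * b * (1 + c) * c\<^sup>2 * exp (- c) / g \<le> e / 8"
    if g: "N \<le> g" and gb: "g < b" and lo: "ln b / 2 < c" and hi: "c < ln b / \<delta>"
      and bg: "b < g powr (2 - \<delta>)" for b g c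
  proof -
    have g1: "1 \<le> g" and b1: "1 \<le> b" using N g gb by auto
    have "ln b < ln (g powr (2 - \<delta>))" using bg b1 by (subst ln_less_cancel_iff) auto
    also have "\<dots> = 2 * ln g - \<delta> * ln g" using g1 by (simp add: ln_powr left_diff_distrib)
    finally have "ln b < 2 * ln g - \<delta> * ln g" .
    moreover have "0 \<le> \<delta> * ln g" using \<delta> g1 by simp
    ultimately have ln_b: "ln b \<le> 2 * ln g" by linarith
    have "exp (2 * c\<^sub>0) \<le> g" using g by (simp add: N_def)
    then have "2 * c\<^sub>0 \<le> ln g" using g1 by (simp add: ln_ge_iff)
    also have "\<dots> \<le> ln b" using g1 gb by simp
    finally have "c\<^sub>0 \<le> c" using lo by simp
    then have c: "2600 \<le> c" "192 * K \<le> e * c" using e by (simp_all add: c\<^sub>0_def field_simps)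
    have "ln b / \<delta> \<le> 2 * ln g / \<delta>" using ln_b \<delta> by (intro divide_right_mono) auto
    with hi have c_ln_g: "c \<le> 2 * ln g / \<delta>" by linarith
    have "4 * c * K / b \<le> 1/64"
      using g gb c b1 hi \<delta> K by (intro linear_ratio_small[of \<delta> K]) (auto simp: N_def)
    moreover have "c\<^sup>2 / g \<le> 1/4"
      using g g1 c c_ln_g \<delta> by (intro square_ratio_small[of \<delta>]) (auto simp: N_def)
    moreover have "2 * b * (1 + c) * c\<^sup>2 * exp (- c) / g \<le> e / 8"
      using g g1 b1 bg lo c c_ln_g \<delta> e by (intro exponential_ratio_small[of \<delta>]) (auto simp: N_def)
    ultimately show ?thesis using c by simp
  qed
  with N show thesis by (rule that)
qed

lemma f_lower_bound_eventually:
  fixes \<delta> \<epsilon> :: real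
  assumes \<delta>: "0 < \<delta>" and \<epsilon>: "0 < \<epsilon>"
  shows "\<exists>N::nat. \<forall>\<beta> \<gamma> \<kappa> :: nat.
    \<beta> \<ge> N \<and> \<gamma> \<ge> N \<and> \<kappa> \<ge> N \<and>
    (1/2) * real \<beta> * ln (real \<beta>) < real \<kappa> \<and>
    real \<kappa> < (1/\<delta>) * real \<beta> * ln (real \<beta>) \<and>
    \<gamma> < \<beta> \<and> real \<beta> < real \<gamma> powr (2 - \<delta>) \<longrightarrow>
    (let c = real \<kappa> / real \<beta> in
      f \<beta> \<gamma> \<kappa> \<ge> (1 - \<epsilon>) * (1 - (c + 1) * exp (- c) - c powr 4 * exp (- 2 * c)) ^ \<beta>)"
proof -
  define e where "e = min \<epsilon> (1/2)"
  have e: "0 < e" "e < 1" "e \<le> \<epsilon>" using \<epsilon> by (auto simp: e_def)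
  have "0 < ln (2 / e)" using e by simp
  then obtain N where N: "1 \<le> N"
    "\<And>b g c. N \<le> g \<Longrightarrow> g < b \<Longrightarrow> ln b / 2 < c \<Longrightarrow> c < ln b / \<delta> \<Longrightarrow> b < g powr (2 - \<delta>) \<Longrightarrow>
      2600 \<le> c \<and> 192 * ln (2 / e) \<le> e * c \<and> 4 * c * ln (2 / e) / b \<le> 1/64 \<and> c\<^sup>2 / g \<le> 1/4 \<and>
      2 * b * (1 + c) * c\<^sup>2 * exp (- c) / g \<le> e / 8"
    using regime_inequalities[OF \<delta> e(1)] by blast
  show ?thesis
  proof (intro exI[of _ "nat \<lceil>N\<rceil>"] allI impI)
    fix \<beta> \<gamma> \<kappa> :: nat
    assume H: "\<beta> \<ge> nat \<lceil>N\<rceil> \<and> \<gamma> \<ge> nat \<lceil>N\<rceil> \<and> \<kappa> \<ge> nat \<lceil>N\<rceil> \<and>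
      (1/2) * real \<beta> * ln (real \<beta>) < real \<kappa> \<and> real \<kappa> < (1/\<delta>) * real \<beta> * ln (real \<beta>) \<and>
      \<gamma> < \<beta> \<and> real \<beta> < real \<gamma> powr (2 - \<delta>)"
    define c where "c = real \<kappa> / real \<beta>"
    have \<gamma>: "N \<le> real \<gamma>" using H real_nat_ceiling_ge[of N] by linarith
    then have \<gamma>1: "1 \<le> \<gamma>" and \<beta>1: "1 \<le> \<beta>" using N H by auto
    have \<kappa>: "real \<kappa> = real \<beta> * c" using \<beta>1 by (simp add: c_def)
    have lo: "ln \<beta> / 2 < c" and hi: "c < ln \<beta> / \<delta>"
      using H \<beta>1 by (simp_all add: c_def field_simps)
    have \<gamma>\<beta>: "real \<gamma> < real \<beta>" and \<beta>\<gamma>: "real \<beta> < real \<gamma> powr (2 - \<delta>)" using H by simp_all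
    from N(2)[OF \<gamma> \<gamma>\<beta> lo hi \<beta>\<gamma>] have regime: "2600 \<le> c" "192 * ln (2 / e) \<le> e * c"
      "4 * c * ln (2 / e) / \<beta> \<le> 1/64" "c\<^sup>2 / \<gamma> \<le> 1/4" "2 * real \<beta> * (1 + c) * c\<^sup>2 * exp (- c) / \<gamma> \<le> e / 8"
      by blast+
    have main: "(1 - e) * (1 - (c + 1) * exp (- c) - c ^ 4 * exp (- 2 * c)) ^ \<beta> \<le> f \<beta> \<gamma> \<kappa>"
      by (rule f_ge_main_term[OF \<gamma>1 \<beta>1 \<kappa> e(1,2) regime])
    have "(c + 1) * exp (- c) \<le> 1/6" "c ^ 4 * exp (- 2 * c) \<le> 1/4"
      using large_c_inequalities(2,3)[OF regime(1)] by (simp_all add: exp_minus field_simps)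
    then have "0 \<le> (1 - (c + 1) * exp (- c) - c ^ 4 * exp (- 2 * c)) ^ \<beta>" by simp
    with e(3) main have "(1 - \<epsilon>) * (1 - (c + 1) * exp (- c) - c ^ 4 * exp (- 2 * c)) ^ \<beta> \<le> f \<beta> \<gamma> \<kappa>"
      by (smt (verit) mult_right_mono)
    moreover have "c powr 4 = c ^ 4" using regime(1) by simp
    ultimately show "let c = real \<kappa> / real \<beta> in
        f \<beta> \<gamma> \<kappa> \<ge> (1 - \<epsilon>) * (1 - (c + 1) * exp (- c) - c powr 4 * exp (- 2 * c)) ^ \<beta>"
      by (simp add: c_def)
  qed
qed

theorem theorem5p1:
  shows "\<exists>C::real > 0. \<forall>\<delta>::real > 0. \<forall>\<epsilon>::real > 0. \<exists>N::nat. \<forall>\<beta> \<gamma> \<kappa> :: nat.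
    \<beta> \<ge> N \<and> \<gamma> \<ge> N \<and> \<kappa> \<ge> N \<and>
    (1/2) * real \<beta> * ln (real \<beta>) < real \<kappa> \<and>
    real \<kappa> < (1/\<delta>) * real \<beta> * ln (real \<beta>) \<and>
    \<gamma> < \<beta> \<and> real \<beta> < real \<gamma> powr (2 - \<delta>) \<longrightarrow>
    (let c = real \<kappa> / real \<beta> in
      f \<beta> \<gamma> \<kappa> \<ge> (1 - \<epsilon>) * (1 - (c + 1) * exp (- c) - c powr C * exp (- 2 * c)) ^ \<beta>)"
  by (intro exI[of _ "4::real"] conjI allI impI f_lower_bound_eventually) auto

end
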